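(* Let $\mathfrak R$ be either the Sierpiński gasket iterated graph system or the pentagonal Sierpiński carpet iterated graph system, with replacement graphs $G_m$, and let $n\in\mathbb N$. For every $\tilde w\in W_\#$ there is a folding of $G_{n+|\tilde w|}$ onto $\tilde w\cdot W_n:=\{\tilde w u:u\in W_n\}$.
   Context: Graphs: $(V,E)$ with $V$ finite non-empty, $E\subseteq V\times V$, $(x,y)\in E\Rightarrow(y,x)\notin E$; $\{x,y\}\in E$ means either orientation. A mapping between graphs $\varphi:G\to G'$ maps vertices so that each edge $\{x,y\}$ has $\varphi(x)=\varphi(y)$ or $\{\varphi(x),\varphi(y)\}\in E(G')$. A folding of $G$ onto $U\subseteq V(G)$ is a mapping between graphs $\varphi:G\to\langle U\rangle$ (induced subgraph) with $\varphi|_U=\mathrm{id}_U$. An iterated graph system consists of a connected graph $G_1=(S,E)$, a finite set $\mathcal T$ of types, a surjective typing $\mathfrak t:E\to\mathcal T$ and gluing rules $I_t\subseteq S\times S$. With $W_m=S^m$, $W_\#=\bigcup_{m\ge1}W_m$, $[w]_k=w_1\cdots w_k$, the replacement graphs $G_m=(W_m,E_m)$ are defined recursively: $(w,v)\in E_{m+1}$ iff either (1) $[w]_m=[v]_m$ and $(w_{m+1},v_{m+1})\in E$ (type $\mathfrak t(w_{m+1},v_{m+1})$), or (2) $([w]_m,[v]_m)\in E_m$ and $(w_{m+1},v_{m+1})\in I_{\mathfrak t([w]_m,[v]_m)}$ (type $\mathfrak t([w]_m,[v]_m)$). Sierpiński gasket: $S=\{0,1,2\}$, $E=\{(0,1),(1,2),(0,2)\}$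 with types $a,b,c$ respectively, $I_a=\{(1,0)\}$, $I_b=\{(2,1)\}$, $I_c=\{(2,0)\}$. Pentagonal Sierpiński carpet: $S=\{0,1,2,3,4\}$, $E=\{(0,1),(1,2),(2,3),(3,4),(4,0)\}$ with types $a,b,c,d,e$ respectively, $I_a=\{(1,0),(2,4)\}$, $I_b=\{(2,1),(3,0)\}$, $I_c=\{(3,2),(4,1)\}$, $I_d=\{(4,3),(0,2)\}$, $I_e=\{(0,4),(1,3)\}$. *)

theory Defs
  imports Main
begin

definition has_edge :: "('v \<times> 'v) set \<Rightarrow> 'v \<Rightarrow> 'v \<Rightarrow> bool" where
  "has_edge E x y \<longleftrightarrow> (x, y) \<in> E \<or> (y, x) \<in> E"

definition graph_mapping ::
  "'v set \<Rightarrow> ('v \<times> 'v) set \<Rightarrow> 'w set \<Rightarrow> ('w \<times> 'w) set \<Rightarrow> ('v \<Rightarrow> 'w) \<Rightarrow> bool" where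
  "graph_mapping V E V' E' \<phi> \<longleftrightarrow>
     (\<forall>x\<in>V. \<phi> x \<in> V') \<and>
     (\<forall>x y. (x, y) \<in> E \<longrightarrow> \<phi> x = \<phi> y \<or> has_edge E' (\<phi> x) (\<phi> y))"

definition induced_edges :: "('v \<times> 'v) set \<Rightarrow> 'v set \<Rightarrow> ('v \<times> 'v) set" where
  "induced_edges E U = E \<inter> (U \<times> U)"

definition graph_folding :: "'v set \<Rightarrow> ('v \<times> 'v) set \<Rightarrow> 'v set \<Rightarrow> ('v \<Rightarrow> 'v) \<Rightarrow> bool" where
  "graph_folding V E U \<phi> \<longleftrightarrow> U \<subseteq> V \<and> graph_mapping V E U (induced_edges E U) \<phi> \<and> (\<forall>x\<in>U. \<phi> x = x)"

record igs =
  igs_S :: "nat set"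
  igs_E :: "(nat \<times> nat) set"
  igs_type :: "nat \<times> nat \<Rightarrow> nat"
  igs_glue :: "nat \<Rightarrow> (nat \<times> nat) set"

definition words :: "igs \<Rightarrow> nat \<Rightarrow> nat list set" where
  "words R m = {w. length w = m \<and> set w \<subseteq> igs_S R}"

definition all_words :: "igs \<Rightarrow> nat list set" where
  "all_words R = (\<Union>m\<in>{1..}. words R m)"

fun typed_edges :: "igs \<Rightarrow> nat \<Rightarrow> ((nat list \<times> nat list) \<times> nat) set" where
  "typed_edges R 0 = {}"
| "typed_edges R (Suc 0) = {(([a], [b]), igs_type R (a, b)) | a b. (a, b) \<in> igs_E R}"
| "typed_edges R (Suc (Suc m)) =
     {((w @ [a], w @ [b]), igs_type R (a, b)) | w a b. w \<in> words R (Suc m) \<and> (a, b) \<in> igs_E R}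
   \<union> {((w @ [a], v @ [b]), t) | w v a b t.
        ((w, v), t) \<in> typed_edges R (Suc m) \<and> (a, b) \<in> igs_glue R t}"

definition edges :: "igs \<Rightarrow> nat \<Rightarrow> (nat list \<times> nat list) set" where
  "edges R m = fst ` typed_edges R m"

definition sierpinski_gasket :: igs where
  "sierpinski_gasket =
    \<lparr> igs_S = {0, 1, 2},
      igs_E = {(0, 1), (1, 2), (0, 2)},
      igs_type = (\<lambda>e. if e = (0, 1) then 0 else if e = (1, 2) then 1 else 2),
      igs_glue = (\<lambda>t. if t = 0 then {(1, 0)} else if t = 1 then {(2, 1)} else {(2, 0)}) \<rparr>"

definition pentagonal_carpet :: igs where
  "pentagonal_carpet =
    \<lparr> igs_S = {0, 1, 2, 3, 4},
      igs_E = {(0, 1), (1, 2), (2, 3), (3, 4), (4, 0)},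
      igs_type = fst,
      igs_glue = (\<lambda>t. if t = 0 then {(1, 0), (2, 4)}
                   else if t = 1 then {(2, 1), (3, 0)}
                   else if t = 2 then {(3, 2), (4, 1)}
                   else if t = 3 then {(4, 3), (0, 2)}
                   else {(0, 4), (1, 3)}) \<rparr>"

end

theory Submission
  imports Defs
begin

text \<open>It suffices to find, for every letter c, a mapping F_c from G_(m+1) to G_m with
  F_c (c u) = u.  Composing F_(w_1), ..., F_(w_k) gives a mapping \<psi> of G_(|w|+n) to G_n
  with \<psi> (w u) = u, and since prefixing by w carries edges of G_n to edges of G_(|w|+n),
  x \<mapsto> w \<psi>(x) is a folding onto w W_n.
  For the gasket, F_c forgets the first letter d and rotates the remaining letters by d - c; the
  only edges between different level-one cells, p q^j -- q p^j, are collapsed to a point.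
  For the pentagonal carpet, F_0 maps each level-one cell d onto cell 0 by a symmetry of the
  pentagon, composed for d = 3 with the folding along the axis through corner 0, chosen such that
  the maps of two adjacent cells agree along their glued sides; F_c is F_0 conjugated by a rotation.\<close>

lemma list_all2_set_subset:
  assumes "list_all2 Q u v" and "\<And>a b. Q a b \<Longrightarrow> a \<in> A \<and> b \<in> B"
  shows "set u \<subseteq> A" and "set v \<subseteq> B"
  using assms by (induction u v rule: list_all2_induct) auto

lemma map_eq_map_if_list_all2:
  "list_all2 Q u v \<Longrightarrow> (\<And>a b. Q a b \<Longrightarrow> f a = g b) \<Longrightarrow> map f u = map g v"
  by (induction u v rule: list_all2_induct) auto

lemma list_all2_const_iff:
  "list_all2 (\<lambda>a b. a = x \<and> b = y) u v \<longleftrightarrow> u = replicate (length u) x \<and> v = replicate (length u) y"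
  by (induction u arbitrary: v) (auto simp: list_all2_Cons1)

definition igs_edge :: "igs \<Rightarrow> nat \<Rightarrow> nat list \<Rightarrow> nat list \<Rightarrow> nat \<Rightarrow> bool" where
  "igs_edge R m x y t \<longleftrightarrow> (\<exists>z p q u u'. x = z @ p # u \<and> y = z @ q # u' \<and> set z \<subseteq> igs_S R
     \<and> (p, q) \<in> igs_E R \<and> t = igs_type R (p, q)
     \<and> list_all2 (\<lambda>a b. (a, b) \<in> igs_glue R t) u u' \<and> m = Suc (length z + length u))"

lemma igs_edge_Suc_0:
  "igs_edge R (Suc 0) x y t \<longleftrightarrow> (\<exists>a b. x = [a] \<and> y = [b] \<and> (a, b) \<in> igs_E R \<and> t = igs_type R (a, b))"
  unfolding igs_edge_def by fastforce

lemma igs_edge_Suc_Suc: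
  "igs_edge R (Suc (Suc m)) x y t \<longleftrightarrow>
     (\<exists>w a b. x = w @ [a] \<and> y = w @ [b] \<and> w \<in> words R (Suc m) \<and> (a, b) \<in> igs_E R \<and> t = igs_type R (a, b))
   \<or> (\<exists>w v a b. x = w @ [a] \<and> y = v @ [b] \<and> igs_edge R (Suc m) w v t \<and> (a, b) \<in> igs_glue R t)"
  (is "_ \<longleftrightarrow> ?new \<or> ?glued")
proof
  assume "igs_edge R (Suc (Suc m)) x y t"
  then obtain z p q u u' where xy: "x = z @ p # u" "y = z @ q # u'" and z: "set z \<subseteq> igs_S R"
    and pq: "(p, q) \<in> igs_E R" "t = igs_type R (p, q)"
    and glue: "list_all2 (\<lambda>a b. (a, b) \<in> igs_glue R t) u u'" and m: "Suc m = length z + length u"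
    unfolding igs_edge_def by auto
  show "?new \<or> ?glued"
  proof (cases u rule: rev_cases)
    case Nil
    with glue have "u' = []" by simp
    with Nil xy z pq m have ?new by (auto simp: words_def)
    then show ?thesis ..
  next
    case (snoc u0 a)
    with glue obtain u0' b where u': "u' = u0' @ [b]" and "list_all2 (\<lambda>a b. (a, b) \<in> igs_glue R t) u0 u0'"
      and ab: "(a, b) \<in> igs_glue R t"
      by (auto simp: list_all2_append1 list_all2_Cons1)
    with z pq m snoc have "igs_edge R (Suc m) (z @ p # u0) (z @ q # u0') t"
      unfolding igs_edge_def by fastforce
    with xy snoc u' ab have ?glued by auto
    then show ?thesis ..
  qed
next
  assume "?new \<or> ?glued"
  then show "igs_edge R (Suc (Suc m)) x y t"
  proof
    assume ?new
    then show ?thesis unfolding igs_edge_def words_def by fastforce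
  next
    assume ?glued
    then obtain w v a b z p q u u' where "x = w @ [a]" "y = v @ [b]" and ab: "(a, b) \<in> igs_glue R t"
      and "w = z @ p # u" "v = z @ q # u'" "set z \<subseteq> igs_S R" "(p, q) \<in> igs_E R" "t = igs_type R (p, q)"
      and tail: "list_all2 (\<lambda>a b. (a, b) \<in> igs_glue R t) u u'" and "Suc m = Suc (length z + length u)"
      unfolding igs_edge_def by blast
    moreover from this have "x = z @ p # (u @ [a])" "y = z @ q # (u' @ [b])"
      "list_all2 (\<lambda>a b. (a, b) \<in> igs_glue R t) (u @ [a]) (u' @ [b])"
      "Suc (Suc m) = Suc (length z + length (u @ [a]))"
      by (simp_all add: list_all2_appendI)
    ultimately show ?thesis unfolding igs_edge_def by blast
  qed
qed

lemma typed_edges_iff: "((x, y), t) \<in> typed_edges R (Suc m) \<longleftrightarrow> igs_edge R (Suc m) x y t"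
  by (induction m arbitrary: x y t) (auto simp: igs_edge_Suc_0 igs_edge_Suc_Suc)

lemma edges_iff: "(x, y) \<in> edges R m \<longleftrightarrow> (\<exists>t. igs_edge R m x y t)"
proof (cases m)
  case 0
  then show ?thesis by (simp add: edges_def igs_edge_def)
next
  case (Suc k)
  have "(x, y) \<in> fst ` typed_edges R m \<longleftrightarrow> (\<exists>t. ((x, y), t) \<in> typed_edges R m)" by force
  with Suc show ?thesis by (simp add: edges_def typed_edges_iff)
qed

definition igs_wellformed :: "igs \<Rightarrow> bool" where
  "igs_wellformed R \<longleftrightarrow> igs_E R \<subseteq> igs_S R \<times> igs_S R \<and> (\<forall>t. igs_glue R t \<subseteq> igs_S R \<times> igs_S R)"

lemma edges_subset_words:
  assumes "igs_wellformed R"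
  shows "edges R m \<subseteq> words R m \<times> words R m"
proof clarify
  from assms have E: "igs_E R \<subseteq> igs_S R \<times> igs_S R" and glue: "\<And>t. igs_glue R t \<subseteq> igs_S R \<times> igs_S R"
    by (simp_all add: igs_wellformed_def)
  fix x y assume "(x, y) \<in> edges R m"
  then obtain t z p q u u' where xy: "x = z @ p # u" "y = z @ q # u'" "set z \<subseteq> igs_S R"
    "(p, q) \<in> igs_E R" and tail: "list_all2 (\<lambda>a b. (a, b) \<in> igs_glue R t) u u'"
    and m: "m = Suc (length z + length u)"
    unfolding edges_iff igs_edge_def by blast
  from glue[of t] have "\<And>a b. (a, b) \<in> igs_glue R t \<Longrightarrow> a \<in> igs_S R \<and> b \<in> igs_S R" by auto
  from list_all2_set_subset[OF tail this] xy m E list_all2_lengthD[OF tail]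
  show "x \<in> words R m \<and> y \<in> words R m"
    by (auto simp: words_def)
qed

lemma edges_append_prefix:
  assumes "(u, v) \<in> edges R n" and "set w \<subseteq> igs_S R"
  shows "(w @ u, w @ v) \<in> edges R (length w + n)"
proof -
  from assms(1) obtain t z p q a b where "u = z @ p # a" "v = z @ q # b" "set z \<subseteq> igs_S R"
    "(p, q) \<in> igs_E R" "t = igs_type R (p, q)"
    "list_all2 (\<lambda>x y. (x, y) \<in> igs_glue R t) a b" "n = Suc (length z + length a)"
    unfolding edges_iff igs_edge_def by blast
  moreover from this assms(2) have "w @ u = (w @ z) @ p # a" "w @ v = (w @ z) @ q # b"
    "set (w @ z) \<subseteq> igs_S R" "length w + n = Suc (length (w @ z) + length a)" by auto
  ultimately show ?thesis unfolding edges_iff igs_edge_def by blast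
qed

lemma graph_mapping_id: "graph_mapping V E V E (\<lambda>x. x)"
  by (simp add: graph_mapping_def has_edge_def)

lemma graph_mapping_comp:
  assumes "graph_mapping V E V' E' f" and "graph_mapping V' E' V'' E'' g"
  shows "graph_mapping V E V'' E'' (g \<circ> f)"
  using assms unfolding graph_mapping_def has_edge_def by (simp, metis)

abbreviation level_map :: "igs \<Rightarrow> nat \<Rightarrow> nat \<Rightarrow> (nat list \<Rightarrow> nat list) \<Rightarrow> bool" where
  "level_map R m m' f \<equiv> graph_mapping (words R m) (edges R m) (words R m') (edges R m') f"

lemma exists_prefix_stripping_map:
  assumes strip: "\<And>c m. c \<in> igs_S R \<Longrightarrow> level_map R (Suc m) m (F c)"
    and strip_Cons: "\<And>c m x. c \<in> igs_S R \<Longrightarrow> x \<in> words R m \<Longrightarrow> F c (c # x) = x"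
    and "set w \<subseteq> igs_S R"
  shows "\<exists>\<psi>. level_map R (length w + n) n \<psi> \<and> (\<forall>u \<in> words R n. \<psi> (w @ u) = u)"
  using \<open>set w \<subseteq> igs_S R\<close>
proof (induction w)
  case Nil
  show ?case using graph_mapping_id by auto
next
  case (Cons c w)
  then obtain \<psi> where \<psi>: "level_map R (length w + n) n \<psi>" "\<forall>u \<in> words R n. \<psi> (w @ u) = u"
    and c: "c \<in> igs_S R" by auto
  have "level_map R (length (c # w) + n) n (\<psi> \<circ> F c)"
    using graph_mapping_comp[OF strip[OF c] \<psi>(1)] by simp
  moreover have "(\<psi> \<circ> F c) ((c # w) @ u) = u" if "u \<in> words R n" for u
  proof -
    have "w @ u \<in> words R (length w + n)" using Cons.prems that by (auto simp: words_def)
    with strip_Cons[OF c] \<psi>(2) that show ?thesis by simp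
  qed
  ultimately show ?case by blast
qed

lemma graph_folding_onto_cylinder:
  assumes \<psi>: "level_map R (length w + n) n \<psi>" and \<psi>_prefix: "\<And>u. u \<in> words R n \<Longrightarrow> \<psi> (w @ u) = u"
    and w: "set w \<subseteq> igs_S R" and edges_words: "\<And>m. edges R m \<subseteq> words R m \<times> words R m"
  shows "graph_folding (words R (n + length w)) (edges R (n + length w))
           {w @ u | u. u \<in> words R n} (\<lambda>x. w @ \<psi> x)"
  unfolding graph_folding_def graph_mapping_def
proof (intro conjI ballI allI impI)
  let ?U = "{w @ u | u. u \<in> words R n}"
  show "?U \<subseteq> words R (n + length w)" using w by (auto simp: words_def)
  show "w @ \<psi> x \<in> ?U" if "x \<in> words R (n + length w)" for x
    using \<psi> that by (auto simp: graph_mapping_def add.commute)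
  show "w @ \<psi> x = x" if "x \<in> ?U" for x using that \<psi>_prefix by auto
  fix x y assume "(x, y) \<in> edges R (n + length w)"
  with \<psi> have "\<psi> x = \<psi> y \<or> has_edge (edges R n) (\<psi> x) (\<psi> y)"
    by (simp add: graph_mapping_def add.commute)
  then show "w @ \<psi> x = w @ \<psi> y \<or> has_edge (induced_edges (edges R (n + length w)) ?U) (w @ \<psi> x) (w @ \<psi> y)"
  proof
    assume "has_edge (edges R n) (\<psi> x) (\<psi> y)"
    with edges_words[of n] edges_append_prefix[OF _ w] show ?thesis
      unfolding has_edge_def induced_edges_def by (auto simp: add.commute)
  qed simp
qed

lemma exists_folding_onto_cylinder:
  assumes "igs_wellformed R"
    and "\<And>c m. c \<in> igs_S R \<Longrightarrow> level_map R (Suc m) m (F c)"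
    and "\<And>c m x. c \<in> igs_S R \<Longrightarrow> x \<in> words R m \<Longrightarrow> F c (c # x) = x"
    and "set w \<subseteq> igs_S R"
  shows "\<exists>\<phi>. graph_folding (words R (n + length w)) (edges R (n + length w))
                   {w @ u | u. u \<in> words R n} \<phi>"
proof -
  obtain \<psi> where "level_map R (length w + n) n \<psi>" "\<forall>u \<in> words R n. \<psi> (w @ u) = u"
    using exists_prefix_stripping_map assms(2-4) by blast
  with graph_folding_onto_cylinder edges_subset_words assms(1,4) show ?thesis by blast
qed

lemma gasket_S: "igs_S sierpinski_gasket = {..<3}"
  by (auto simp: sierpinski_gasket_def)

lemma gasket_E_iff: "(p, q) \<in> igs_E sierpinski_gasket \<longleftrightarrow> p < q \<and> q < 3"
  by (auto simp: sierpinski_gasket_def)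

lemma gasket_glue: "(p, q) \<in> igs_E sierpinski_gasket \<Longrightarrow>
    igs_glue sierpinski_gasket (igs_type sierpinski_gasket (p, q)) = {(q, p)}"
  by (auto simp: sierpinski_gasket_def)

lemma igs_wellformed_sierpinski_gasket: "igs_wellformed sierpinski_gasket"
  by (auto simp: igs_wellformed_def sierpinski_gasket_def)

lemma inj_on_add_mod: "inj_on (\<lambda>i. (i + k) mod n) {..<n::nat}"
proof -
  have "a \<le> b" if "a < n" and "(a + k) mod n = (b + k) mod n" for a b
  proof (rule ccontr)
    assume "\<not> a \<le> b"
    with that(2) have "n dvd a - b" using mod_eq_dvd_iff_nat[of "b + k" "a + k" n] by simp
    with that(1) \<open>\<not> a \<le> b\<close> show False using nat_dvd_not_less[of "a - b" n] by simp
  qed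
  then show ?thesis by (auto intro!: inj_onI antisym)
qed

definition gasket_edge :: "nat \<Rightarrow> nat list \<Rightarrow> nat list \<Rightarrow> bool" where
  "gasket_edge m x y \<longleftrightarrow> (\<exists>z p q j. x = z @ p # replicate j q \<and> y = z @ q # replicate j p
     \<and> p \<noteq> q \<and> p < 3 \<and> q < 3 \<and> set z \<subseteq> {..<3} \<and> m = Suc (length z + j))"

lemma gasket_edges_iff:
  "(x, y) \<in> edges sierpinski_gasket m \<longleftrightarrow> (\<exists>z p q j. x = z @ p # replicate j q \<and> y = z @ q # replicate j p
     \<and> p < q \<and> q < 3 \<and> set z \<subseteq> {..<3} \<and> m = Suc (length z + j))"
proof
  assume "(x, y) \<in> edges sierpinski_gasket m"
  then obtain z p q u u' where xy: "x = z @ p # u" "y = z @ q # u'" and z: "set z \<subseteq> {..<3}"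
    and pq: "(p, q) \<in> igs_E sierpinski_gasket"
    and tail: "list_all2 (\<lambda>a b. (a, b) \<in> igs_glue sierpinski_gasket (igs_type sierpinski_gasket (p, q))) u u'"
    and m: "m = Suc (length z + length u)"
    unfolding edges_iff igs_edge_def gasket_S by blast
  from tail have "u = replicate (length u) q \<and> u' = replicate (length u) p"
    by (simp add: gasket_glue[OF pq] list_all2_const_iff)
  with xy z pq m show "\<exists>z p q j. x = z @ p # replicate j q \<and> y = z @ q # replicate j p
     \<and> p < q \<and> q < 3 \<and> set z \<subseteq> {..<3} \<and> m = Suc (length z + j)"
    unfolding gasket_E_iff by metis
next
  assume "\<exists>z p q j. x = z @ p # replicate j q \<and> y = z @ q # replicate j p
     \<and> p < q \<and> q < 3 \<and> set z \<subseteq> {..<3} \<and> m = Suc (length z + j)"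
  then obtain z p q j where xy: "x = z @ p # replicate j q" "y = z @ q # replicate j p"
    and pq: "(p, q) \<in> igs_E sierpinski_gasket" and z: "set z \<subseteq> igs_S sierpinski_gasket"
    and m: "m = Suc (length z + length (replicate j q))"
    unfolding gasket_E_iff gasket_S by auto
  have "list_all2 (\<lambda>a b. (a, b) \<in> igs_glue sierpinski_gasket (igs_type sierpinski_gasket (p, q)))
      (replicate j q) (replicate j p)"
    by (simp add: gasket_glue[OF pq] list_all2_const_iff)
  with xy pq z m show "(x, y) \<in> edges sierpinski_gasket m"
    unfolding edges_iff igs_edge_def by blast
qed

lemma gasket_has_edge_iff: "has_edge (edges sierpinski_gasket m) x y \<longleftrightarrow> gasket_edge m x y"
proof
  have oriented: "gasket_edge m x y" if "(x, y) \<in> edges sierpinski_gasket m" for x y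
    using that unfolding gasket_edges_iff gasket_edge_def by fastforce
  have "gasket_edge m y x" if "gasket_edge m x y" for x y
    using that unfolding gasket_edge_def by blast
  with oriented show "gasket_edge m x y" if "has_edge (edges sierpinski_gasket m) x y"
    using that unfolding has_edge_def by blast
next
  assume "gasket_edge m x y"
  then obtain z p q j where xy: "x = z @ p # replicate j q" "y = z @ q # replicate j p"
    and pq: "p \<noteq> q" "p < 3" "q < 3" and zm: "set z \<subseteq> {..<3}" "m = Suc (length z + j)"
    unfolding gasket_edge_def by blast
  show "has_edge (edges sierpinski_gasket m) x y"
  proof (cases "p < q")
    case True
    have "(x, y) \<in> edges sierpinski_gasket m" unfolding gasket_edges_iff xy zm(2)
      using True pq zm(1) by (intro exI conjI refl) auto
    then show ?thesis by (simp add: has_edge_def)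
  next
    case False
    have "(y, x) \<in> edges sierpinski_gasket m" unfolding gasket_edges_iff xy zm(2)
      using False pq zm(1) by (intro exI conjI refl) auto
    then show ?thesis by (simp add: has_edge_def)
  qed
qed

lemma gasket_edge_map:
  assumes "inj_on \<sigma> {..<3}" and "\<sigma> ` {..<3} \<subseteq> {..<3}" and "gasket_edge m x y"
  shows "gasket_edge m (map \<sigma> x) (map \<sigma> y)"
proof -
  from assms(3) obtain z p q j where xy: "x = z @ p # replicate j q" "y = z @ q # replicate j p"
    and pq: "p \<noteq> q" "p < 3" "q < 3" and z: "set z \<subseteq> {..<3}" and m: "m = Suc (length z + j)"
    unfolding gasket_edge_def by blast
  with assms(1,2) have "map \<sigma> x = map \<sigma> z @ \<sigma> p # replicate j (\<sigma> q)"
    "map \<sigma> y = map \<sigma> z @ \<sigma> q # replicate j (\<sigma> p)" "\<sigma> p \<noteq> \<sigma> q" "\<sigma> p < 3" "\<sigma> q < 3"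
    "set (map \<sigma> z) \<subseteq> {..<3}" "m = Suc (length (map \<sigma> z) + j)"
    by (auto simp: inj_on_eq_iff)
  then show ?thesis unfolding gasket_edge_def by blast
qed

definition gasket_strip :: "nat \<Rightarrow> nat list \<Rightarrow> nat list" where
  "gasket_strip c x = (case x of [] \<Rightarrow> [] | d # x' \<Rightarrow> map (\<lambda>i. (i + (d + 3 - c)) mod 3) x')"

lemma gasket_strip_Cons: "x \<in> words sierpinski_gasket m \<Longrightarrow> gasket_strip c (c # x) = x"
  by (auto simp: gasket_strip_def words_def gasket_S intro!: map_idI)

lemma gasket_strip_level_map:
  assumes "c < 3"
  shows "level_map sierpinski_gasket (Suc m) m (gasket_strip c)"
  unfolding graph_mapping_def
proof (intro conjI ballI allI impI)
  show "gasket_strip c x \<in> words sierpinski_gasket m" if "x \<in> words sierpinski_gasket (Suc m)" for x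
  proof -
    from that obtain d x' where "x = d # x'" "length x' = m" by (cases x) (auto simp: words_def)
    then show ?thesis by (auto simp: gasket_strip_def words_def gasket_S)
  qed
  fix x y assume "(x, y) \<in> edges sierpinski_gasket (Suc m)"
  then have "gasket_edge (Suc m) x y" by (simp add: gasket_has_edge_iff[symmetric] has_edge_def)
  then obtain z p q j where xy: "x = z @ p # replicate j q" "y = z @ q # replicate j p"
    and pq: "p \<noteq> q" "p < 3" "q < 3" and z: "set z \<subseteq> {..<3}" and m: "m = length z + j"
    unfolding gasket_edge_def by auto
  show "gasket_strip c x = gasket_strip c y \<or> has_edge (edges sierpinski_gasket m) (gasket_strip c x) (gasket_strip c y)"
  proof (cases z)
    case Nil
    have "gasket_strip c x = replicate j ((q + (p + 3 - c)) mod 3)"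
      and "gasket_strip c y = replicate j ((p + (q + 3 - c)) mod 3)"
      using xy Nil by (simp_all add: gasket_strip_def)
    moreover have "q + (p + 3 - c) = p + (q + 3 - c)" using \<open>c < 3\<close> by arith
    ultimately show ?thesis by metis
  next
    case (Cons d z')
    let ?\<sigma> = "\<lambda>i. (i + (d + 3 - c)) mod 3"
    have edge: "gasket_edge m (z' @ p # replicate j q) (z' @ q # replicate j p)"
      unfolding gasket_edge_def using pq z m Cons by fastforce
    have "gasket_edge m (map ?\<sigma> (z' @ p # replicate j q)) (map ?\<sigma> (z' @ q # replicate j p))"
      by (rule gasket_edge_map[OF inj_on_add_mod _ edge]) auto
    with xy Cons show ?thesis by (simp add: gasket_strip_def gasket_has_edge_iff)
  qed
qed

lemma less5_cases: "p < (5::nat) \<Longrightarrow> p = 0 \<or> p = 1 \<or> p = 2 \<or> p = 3 \<or> p = 4"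
  by arith

lemma pentagon_S: "igs_S pentagonal_carpet = {..<5}"
  by (auto simp: pentagonal_carpet_def)

definition pentagon_glue :: "nat \<Rightarrow> nat \<Rightarrow> nat \<Rightarrow> bool" where
  "pentagon_glue p a b \<longleftrightarrow> (a = (p + 1) mod 5 \<and> b = p) \<or> (a = (p + 2) mod 5 \<and> b = (p + 4) mod 5)"

lemma pentagon_E_iff: "(p, q) \<in> igs_E pentagonal_carpet \<longleftrightarrow> p < 5 \<and> q = (p + 1) mod 5"
  by (auto simp: pentagonal_carpet_def dest!: less5_cases)

lemma pentagon_type: "igs_type pentagonal_carpet = fst"
  by (simp add: pentagonal_carpet_def)

lemma pentagon_glue_iff: "p < 5 \<Longrightarrow> (a, b) \<in> igs_glue pentagonal_carpet p \<longleftrightarrow> pentagon_glue p a b"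
  by (drule less5_cases) (elim disjE; auto simp: pentagonal_carpet_def pentagon_glue_def)

lemma igs_wellformed_pentagonal_carpet: "igs_wellformed pentagonal_carpet"
  by (auto simp: igs_wellformed_def pentagonal_carpet_def)

definition pentagon_edge :: "nat \<Rightarrow> nat list \<Rightarrow> nat list \<Rightarrow> bool" where
  "pentagon_edge m x y \<longleftrightarrow> (\<exists>z p u u'. x = z @ p # u \<and> y = z @ ((p + 1) mod 5) # u' \<and> p < 5
     \<and> set z \<subseteq> {..<5} \<and> list_all2 (pentagon_glue p) u u' \<and> m = Suc (length z + length u))"

lemma pentagon_edges_iff: "(x, y) \<in> edges pentagonal_carpet m \<longleftrightarrow> pentagon_edge m x y"
proof
  assume "(x, y) \<in> edges pentagonal_carpet m"
  then obtain z p q u u' where xy: "x = z @ p # u" "y = z @ q # u'" "set z \<subseteq> {..<5}"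
    and pq: "p < 5" "q = (p + 1) mod 5"
    and tail: "list_all2 (\<lambda>a b. (a, b) \<in> igs_glue pentagonal_carpet p) u u'" and m: "m = Suc (length z + length u)"
    unfolding edges_iff igs_edge_def pentagon_S pentagon_E_iff pentagon_type by auto
  from tail have "list_all2 (pentagon_glue p) u u'"
    by (rule list_all2_mono) (simp add: pentagon_glue_iff[OF \<open>p < 5\<close>])
  with xy pq m show "pentagon_edge m x y" unfolding pentagon_edge_def by blast
next
  assume "pentagon_edge m x y"
  then obtain z p u u' where xy: "x = z @ p # u" "y = z @ ((p + 1) mod 5) # u'" "set z \<subseteq> {..<5}"
    and p: "p < 5" and tail: "list_all2 (pentagon_glue p) u u'" and m: "m = Suc (length z + length u)"
    unfolding pentagon_edge_def by blast
  from tail have "list_all2 (\<lambda>a b. (a, b) \<in> igs_glue pentagonal_carpet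
      (igs_type pentagonal_carpet (p, (p + 1) mod 5))) u u'"
    by (rule list_all2_mono) (simp add: pentagon_type pentagon_glue_iff[OF p])
  moreover have "(p, (p + 1) mod 5) \<in> igs_E pentagonal_carpet" by (simp add: pentagon_E_iff p)
  ultimately show "(x, y) \<in> edges pentagonal_carpet m"
    using xy m unfolding edges_iff igs_edge_def pentagon_S by blast
qed

definition pentagon_adjacent :: "nat \<Rightarrow> nat list \<Rightarrow> nat list \<Rightarrow> bool" where
  "pentagon_adjacent m x y \<longleftrightarrow> x = y \<or> pentagon_edge m x y \<or> pentagon_edge m y x"

lemma pentagon_level_map_iff:
  "level_map pentagonal_carpet m m' f \<longleftrightarrow>
     (\<forall>x. length x = m \<and> set x \<subseteq> {..<5} \<longrightarrow> length (f x) = m' \<and> set (f x) \<subseteq> {..<5})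
     \<and> (\<forall>x y. pentagon_edge m x y \<longrightarrow> pentagon_adjacent m' (f x) (f y))"
  by (simp add: graph_mapping_def has_edge_def pentagon_adjacent_def pentagon_edges_iff words_def pentagon_S)

lemma pentagon_edge_append:
  assumes "set z \<subseteq> {..<5}" and "pentagon_edge m x y"
  shows "pentagon_edge (length z + m) (z @ x) (z @ y)"
proof -
  from assms(2) obtain z0 p u u' where "x = z0 @ p # u" "y = z0 @ ((p + 1) mod 5) # u'" "p < 5"
    "set z0 \<subseteq> {..<5}" "list_all2 (pentagon_glue p) u u'" "m = Suc (length z0 + length u)"
    unfolding pentagon_edge_def by blast
  moreover from this assms(1) have "z @ x = (z @ z0) @ p # u" "z @ y = (z @ z0) @ ((p + 1) mod 5) # u'"
    "set (z @ z0) \<subseteq> {..<5}" "length z + m = Suc (length (z @ z0) + length u)" by auto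
  ultimately show ?thesis unfolding pentagon_edge_def by blast
qed

lemma pentagon_adjacent_append:
  "set z \<subseteq> {..<5} \<Longrightarrow> pentagon_adjacent m x y \<Longrightarrow> pentagon_adjacent (length z + m) (z @ x) (z @ y)"
  unfolding pentagon_adjacent_def using pentagon_edge_append by blast

definition rot5 :: "nat \<Rightarrow> nat \<Rightarrow> nat" where
  "rot5 k i = (i + k) mod 5"

text \<open>The reflection i \<mapsto> k - i of the letters modulo 5; letters are below 5, so the
  subtraction does not truncate.\<close>

definition refl5 :: "nat \<Rightarrow> nat \<Rightarrow> nat" where
  "refl5 k i = (k + 5 - i) mod 5"

lemma pentagon_glue_rot5: "pentagon_glue p a b \<Longrightarrow> pentagon_glue (rot5 k p) (rot5 k a) (rot5 k b)"
  unfolding pentagon_glue_def rot5_def by (auto simp: mod_simps ac_simps)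

lemma rot5_Suc_mod: "rot5 k ((p + 1) mod 5) = (rot5 k p + 1) mod 5"
  unfolding rot5_def by (simp add: mod_simps ac_simps)

lemma pentagon_glue_refl5:
  "p < 5 \<Longrightarrow> k < 5 \<Longrightarrow> pentagon_glue p a b \<Longrightarrow> pentagon_glue (refl5 k ((p + 1) mod 5)) (refl5 k b) (refl5 k a)"
  unfolding pentagon_glue_def refl5_def by (drule less5_cases)+ auto

lemma refl5_Suc_mod: "p < 5 \<Longrightarrow> k < 5 \<Longrightarrow> refl5 k p = (refl5 k ((p + 1) mod 5) + 1) mod 5"
  unfolding refl5_def by (drule less5_cases)+ auto

lemma pentagon_edge_rot5:
  assumes "pentagon_edge m x y"
  shows "pentagon_edge m (map (rot5 k) x) (map (rot5 k) y)"
proof -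
  from assms obtain z p u u' where xy: "x = z @ p # u" "y = z @ ((p + 1) mod 5) # u'"
    and glue: "list_all2 (pentagon_glue p) u u'" and m: "m = Suc (length z + length u)"
    unfolding pentagon_edge_def by blast
  from glue have "list_all2 (pentagon_glue (rot5 k p)) (map (rot5 k) u) (map (rot5 k) u')"
    by (auto simp: list_all2_map1 list_all2_map2 pentagon_glue_rot5 elim: list_all2_mono)
  moreover have "map (rot5 k) x = map (rot5 k) z @ rot5 k p # map (rot5 k) u"
    "map (rot5 k) y = map (rot5 k) z @ ((rot5 k p + 1) mod 5) # map (rot5 k) u'"
    "rot5 k p < 5" "set (map (rot5 k) z) \<subseteq> {..<5}" "m = Suc (length (map (rot5 k) z) + length (map (rot5 k) u))"
    using xy m rot5_Suc_mod[of k p] by (auto simp: rot5_def)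
  ultimately show ?thesis unfolding pentagon_edge_def by blast
qed

lemma pentagon_edge_refl5:
  assumes "k < 5" and "pentagon_edge m x y"
  shows "pentagon_edge m (map (refl5 k) y) (map (refl5 k) x)"
proof -
  from assms(2) obtain z p u u' where xy: "x = z @ p # u" "y = z @ ((p + 1) mod 5) # u'" and p: "p < 5"
    and glue: "list_all2 (pentagon_glue p) u u'" and m: "m = Suc (length z + length u)"
    unfolding pentagon_edge_def by blast
  let ?q = "refl5 k ((p + 1) mod 5)"
  from glue have "list_all2 (\<lambda>a b. pentagon_glue ?q (refl5 k b) (refl5 k a)) u u'"
    by (rule list_all2_mono) (rule pentagon_glue_refl5[OF p assms(1)])
  then have "list_all2 (pentagon_glue ?q) (map (refl5 k) u') (map (refl5 k) u)"
    by (auto simp: list_all2_conv_all_nth)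
  moreover have "map (refl5 k) y = map (refl5 k) z @ ?q # map (refl5 k) u'"
    "map (refl5 k) x = map (refl5 k) z @ ((?q + 1) mod 5) # map (refl5 k) u"
    "?q < 5" "set (map (refl5 k) z) \<subseteq> {..<5}" "m = Suc (length (map (refl5 k) z) + length (map (refl5 k) u'))"
    using xy m list_all2_lengthD[OF glue] refl5_Suc_mod[OF p assms(1)] by (auto simp: refl5_def)
  ultimately show ?thesis unfolding pentagon_edge_def by blast
qed

lemma level_map_rot5: "level_map pentagonal_carpet m m (map (rot5 k))"
  unfolding pentagon_level_map_iff pentagon_adjacent_def by (auto simp: rot5_def pentagon_edge_rot5)

lemma level_map_refl5: "k < 5 \<Longrightarrow> level_map pentagonal_carpet m m (map (refl5 k))"
  unfolding pentagon_level_map_iff pentagon_adjacent_def by (auto simp: refl5_def pentagon_edge_refl5)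

text \<open>Folding along the symmetry axis of the pentagon through corner 0: a word is reflected
  unless its first nonzero letter is 1 or 2.\<close>

fun keeps_side :: "nat list \<Rightarrow> bool" where
  "keeps_side [] = True"
| "keeps_side (a # x) = (if a = 0 then keeps_side x else a = 1 \<or> a = 2)"

definition fold0 :: "nat list \<Rightarrow> nat list" where
  "fold0 x = (if keeps_side x then x else map (refl5 0) x)"

lemma keeps_side_append_zeros: "set z \<subseteq> {0} \<Longrightarrow> keeps_side (z @ x) = keeps_side x"
  by (induction z) auto

lemma keeps_side_append: "\<not> set z \<subseteq> {0} \<Longrightarrow> keeps_side (z @ x) = keeps_side z"
  by (induction z) auto

lemma fold0_append_zeros: "set z \<subseteq> {0} \<Longrightarrow> fold0 (z @ x) = z @ fold0 x"
  by (auto simp: fold0_def keeps_side_append_zeros refl5_def intro!: map_idI)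

lemma keeps_side_12: "set x \<subseteq> {1, 2} \<Longrightarrow> keeps_side x"
  by (cases x) auto

lemma fold0_eq_self: "set x \<subseteq> {1, 2} \<Longrightarrow> fold0 x = x"
  by (simp add: fold0_def keeps_side_12)

lemma fold0_eq_refl5: "set x \<subseteq> {3, 4} \<Longrightarrow> fold0 x = map (refl5 0) x"
  by (cases x) (auto simp: fold0_def)

lemma pentagon_adjacent_fold0_Cons:
  assumes p: "p < 5" and glue: "list_all2 (pentagon_glue p) u u'"
  shows "pentagon_adjacent (Suc (length u)) (fold0 (p # u)) (fold0 ((p + 1) mod 5 # u'))"
proof -
  let ?x = "p # u" and ?y = "(p + 1) mod 5 # u'"
  have edge: "pentagon_edge (Suc (length u)) ?x ?y"
    using p glue unfolding pentagon_edge_def by fastforce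
  have "pentagon_edge (Suc (length u)) (map (refl5 0) ?y) (map (refl5 0) ?x)"
    by (rule pentagon_edge_refl5[OF _ edge]) simp
  then have flipped: "pentagon_adjacent (Suc (length u)) (map (refl5 0) ?x) (map (refl5 0) ?y)"
    unfolding pentagon_adjacent_def by blast
  consider "p = 0" | "p = 1" | "p = 2" | "p = 3" | "p = 4" using less5_cases[OF p] by blast
  then show ?thesis
  proof cases
    case 1
    have "set u \<subseteq> {1, 2}"
      by (rule list_all2_set_subset(1)[OF glue, where B = UNIV]) (auto simp: pentagon_glue_def 1)
    then have "fold0 ?x = ?x" "fold0 ?y = ?y" using 1 by (simp_all add: fold0_def keeps_side_12)
    with edge show ?thesis by (simp add: pentagon_adjacent_def)
  next
    case 2
    then have "fold0 ?x = ?x" "fold0 ?y = ?y" by (simp_all add: fold0_def)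
    with edge show ?thesis by (simp add: pentagon_adjacent_def)
  next
    case 3
    have "map (\<lambda>a. a) u = map (refl5 0) u'"
      by (rule map_eq_map_if_list_all2[OF glue]) (auto simp: pentagon_glue_def refl5_def 3)
    with 3 have "fold0 ?x = fold0 ?y" by (simp add: fold0_def refl5_def)
    then show ?thesis by (simp add: pentagon_adjacent_def)
  next
    case 4
    then have "fold0 ?x = map (refl5 0) ?x" "fold0 ?y = map (refl5 0) ?y" by (simp_all add: fold0_def)
    with flipped show ?thesis by simp
  next
    case 5
    have "set u' \<subseteq> {3, 4}"
      by (rule list_all2_set_subset(2)[OF glue, where A = UNIV]) (auto simp: pentagon_glue_def 5)
    then have "fold0 ?y = map (refl5 0) ?y"
      using 5 fold0_append_zeros[of "[0]" u'] by (simp add: fold0_eq_refl5 refl5_def)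
    moreover have "fold0 ?x = map (refl5 0) ?x" using 5 by (simp add: fold0_def)
    ultimately show ?thesis using flipped by simp
  qed
qed

lemma level_map_fold0: "level_map pentagonal_carpet m m fold0"
  unfolding pentagon_level_map_iff
proof (rule conjI; intro allI impI)
  show "length (fold0 x) = m \<and> set (fold0 x) \<subseteq> {..<5}" if "length x = m \<and> set x \<subseteq> {..<5}" for x
    using that by (auto simp: fold0_def refl5_def)
  fix x y assume edge: "pentagon_edge m x y"
  then obtain z p u u' where xy: "x = z @ p # u" "y = z @ ((p + 1) mod 5) # u'" and p: "p < 5"
    and z: "set z \<subseteq> {..<5}" and glue: "list_all2 (pentagon_glue p) u u'" and m: "m = Suc (length z + length u)"
    unfolding pentagon_edge_def by blast
  show "pentagon_adjacent m (fold0 x) (fold0 y)"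
  proof (cases "set z \<subseteq> {0}")
    case True
    from pentagon_adjacent_append[OF z pentagon_adjacent_fold0_Cons[OF p glue]]
    show ?thesis using True xy m by (simp add: fold0_append_zeros)
  next
    case False
    then have "keeps_side x = keeps_side y" using xy keeps_side_append by simp
    moreover have "pentagon_edge m (map (refl5 0) y) (map (refl5 0) x)"
      by (rule pentagon_edge_refl5[OF _ edge]) simp
    ultimately show ?thesis using edge by (auto simp: fold0_def pentagon_adjacent_def)
  qed
qed

text \<open>Cells 1 and 4 are reflected onto cell 0 across their common sides with it and cell 2 is
  rotated onto it. Cell 3 is glued to both cell 2 and cell 4, and no single symmetry of the
  pentagon matches both of their images along the glued sides, so it is rotated and then folded.\<close>

definition pentagon_cell_map :: "nat \<Rightarrow> nat list \<Rightarrow> nat list" where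
  "pentagon_cell_map d = (if d = 0 then (\<lambda>x. x) else if d = 1 then map (refl5 1)
     else if d = 2 then map (rot5 3) else if d = 3 then fold0 \<circ> map (rot5 2) else map (refl5 4))"

lemma level_map_cell_map: "level_map pentagonal_carpet m m (pentagon_cell_map d)"
proof -
  have "level_map pentagonal_carpet m m (fold0 \<circ> map (rot5 2))"
    by (rule graph_mapping_comp[OF level_map_rot5 level_map_fold0])
  then show ?thesis
    using graph_mapping_id[of "words pentagonal_carpet m" "edges pentagonal_carpet m"]
      level_map_refl5[of 1 m] level_map_refl5[of 4 m] level_map_rot5[of m 3]
    by (simp add: pentagon_cell_map_def)
qed

lemma pentagon_cell_map_glue:
  assumes p: "p < 5" and glue: "list_all2 (pentagon_glue p) u u'"
  shows "pentagon_cell_map p u = pentagon_cell_map ((p + 1) mod 5) u'"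
proof -
  note map_eq = map_eq_map_if_list_all2[OF glue]
  consider "p = 0" | "p = 1" | "p = 2" | "p = 3" | "p = 4" using less5_cases[OF p] by blast
  then show ?thesis
  proof cases
    case 1
    have "map (\<lambda>a. a) u = map (refl5 1) u'"
      by (rule map_eq) (auto simp: pentagon_glue_def refl5_def 1)
    with 1 show ?thesis by (simp add: pentagon_cell_map_def)
  next
    case 2
    have "map (refl5 1) u = map (rot5 3) u'"
      by (rule map_eq) (auto simp: pentagon_glue_def refl5_def rot5_def 2)
    with 2 show ?thesis by (simp add: pentagon_cell_map_def)
  next
    case 3
    have "set u' \<subseteq> {1, 2}"
      by (rule list_all2_set_subset(2)[OF glue, where A = UNIV]) (auto simp: pentagon_glue_def 3)
    then have "fold0 (map (rot5 2) u') = map (refl5 0 \<circ> rot5 2) u'"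
      by (subst fold0_eq_refl5) (auto simp: rot5_def)
    moreover have "map (rot5 3) u = map (refl5 0 \<circ> rot5 2) u'"
      by (rule map_eq) (auto simp: pentagon_glue_def refl5_def rot5_def 3)
    ultimately show ?thesis using 3 by (simp add: pentagon_cell_map_def)
  next
    case 4
    have "set u \<subseteq> {4, 0}"
      by (rule list_all2_set_subset(1)[OF glue, where B = UNIV]) (auto simp: pentagon_glue_def 4)
    then have "fold0 (map (rot5 2) u) = map (rot5 2) u"
      by (subst fold0_eq_self) (auto simp: rot5_def)
    moreover have "map (rot5 2) u = map (refl5 4) u'"
      by (rule map_eq) (auto simp: pentagon_glue_def refl5_def rot5_def 4)
    ultimately show ?thesis using 4 by (simp add: pentagon_cell_map_def)
  next
    case 5
    have "map (refl5 4) u = map (\<lambda>b. b) u'"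
      by (rule map_eq) (auto simp: pentagon_glue_def refl5_def 5)
    with 5 show ?thesis by (simp add: pentagon_cell_map_def)
  qed
qed

definition pentagon_strip0 :: "nat list \<Rightarrow> nat list" where
  "pentagon_strip0 x = (case x of [] \<Rightarrow> [] | d # x' \<Rightarrow> pentagon_cell_map d x')"

lemma level_map_strip0: "level_map pentagonal_carpet (Suc m) m pentagon_strip0"
  unfolding pentagon_level_map_iff
proof (rule conjI; intro allI impI)
  note cell_map = level_map_cell_map[unfolded pentagon_level_map_iff]
  show "length (pentagon_strip0 x) = m \<and> set (pentagon_strip0 x) \<subseteq> {..<5}"
    if "length x = Suc m \<and> set x \<subseteq> {..<5}" for x
    using that cell_map by (cases x) (auto simp: pentagon_strip0_def)
  fix x y assume "pentagon_edge (Suc m) x y"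
  then obtain z p u u' where xy: "x = z @ p # u" "y = z @ ((p + 1) mod 5) # u'" and p: "p < 5"
    and z: "set z \<subseteq> {..<5}" and glue: "list_all2 (pentagon_glue p) u u'" and m: "m = length z + length u"
    unfolding pentagon_edge_def by auto
  show "pentagon_adjacent m (pentagon_strip0 x) (pentagon_strip0 y)"
  proof (cases z)
    case Nil
    with xy pentagon_cell_map_glue[OF p glue] show ?thesis
      by (simp add: pentagon_strip0_def pentagon_adjacent_def)
  next
    case (Cons d z')
    with z m have "pentagon_edge m (z' @ p # u) (z' @ ((p + 1) mod 5) # u')"
      using p glue unfolding pentagon_edge_def by auto
    with cell_map xy Cons show ?thesis by (simp add: pentagon_strip0_def)
  qed
qed

definition pentagon_strip :: "nat \<Rightarrow> nat list \<Rightarrow> nat list" where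
  "pentagon_strip c = map (rot5 c) \<circ> pentagon_strip0 \<circ> map (rot5 (5 - c))"

lemma level_map_strip: "level_map pentagonal_carpet (Suc m) m (pentagon_strip c)"
  unfolding pentagon_strip_def
  by (rule graph_mapping_comp[OF level_map_rot5 graph_mapping_comp[OF level_map_strip0 level_map_rot5]])

lemma pentagon_strip_Cons:
  assumes "c < 5" and "x \<in> words pentagonal_carpet m"
  shows "pentagon_strip c (c # x) = x"
proof -
  have "rot5 c (rot5 (5 - c) i) = i" if "i < 5" for i
    using that assms(1) by (simp add: rot5_def mod_simps)
  with assms show ?thesis unfolding words_def pentagon_S
    by (auto simp: pentagon_strip_def pentagon_strip0_def pentagon_cell_map_def rot5_def intro!: map_idI)
qed

theorem proposition4p10:
  fixes R :: igs and n :: nat and w :: "nat list"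
  assumes "R = sierpinski_gasket \<or> R = pentagonal_carpet"
    and "w \<in> all_words R"
  shows "\<exists>\<phi>. graph_folding (words R (n + length w)) (edges R (n + length w))
                   {w @ u | u. u \<in> words R n} \<phi>"
proof -
  have w: "set w \<subseteq> igs_S R" using assms(2) by (auto simp: all_words_def words_def)
  from assms(1) show ?thesis
  proof
    assume "R = sierpinski_gasket"
    with w show ?thesis
      by (intro exists_folding_onto_cylinder[where F = gasket_strip])
        (auto simp: igs_wellformed_sierpinski_gasket gasket_S gasket_strip_level_map gasket_strip_Cons)
  next
    assume "R = pentagonal_carpet"
    with w show ?thesis
      by (intro exists_folding_onto_cylinder[where F = pentagon_strip])
        (auto simp: igs_wellformed_pentagonal_carpet pentagon_S level_map_strip pentagon_strip_Cons)
  qed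
qed

end
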